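(* Let $\Sigma\subseteq\mathcal L_\Diamond$ be finite and closed under subformulas and let $\mathcal I$ be a finite weak $\Sigma$-quasimodel such that for every deterministic weak $\mathcal L_\Diamond$-quasimodel $\mathcal A$ the relation $\rightharpoonup\ \subseteq|\mathcal I|\times|\mathcal A|$ is a surjective dynamic simulation. Let $P=\{w\in|\mathcal I|:\not\vdash\mathrm{Sim}(w)\}$, and for $w\in P$ let $R(w)$ be the set of $v\in P$ for which there is a finite sequence $u_0,\dots,u_n$ of elements of $P$ with $u_0=w$, $u_n=v$ and $u_i\,S_{\mathcal I}\,u_{i+1}$ for all $i<n$. Then for every $w\in P$, $$\vdash\ \bigcirc\bigwedge_{v\in R(w)}\mathrm{Sim}(v)\ \to\ \bigwedge_{v\in R(w)}\mathrm{Sim}(v).$$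
   Context: $\mathcal L_\Diamond$ is the propositional language with $\bot,\wedge,\vee,\to$ and unary modalities $\bigcirc$, $\Diamond$. ${\sf ITL}^0_\Diamond$ is axiomatized by all intuitionistic propositional tautologies, $\neg\bigcirc\bot$, $\bigcirc\varphi\wedge\bigcirc\psi\to\bigcirc(\varphi\wedge\psi)$, $\bigcirc(\varphi\vee\psi)\to\bigcirc\varphi\vee\bigcirc\psi$, $\bigcirc(\varphi\to\psi)\to(\bigcirc\varphi\to\bigcirc\psi)$, $\varphi\vee\bigcirc\Diamond\varphi\to\Diamond\varphi$, closed under modus ponens and the rules $\varphi/\bigcirc\varphi$, $(\varphi\to\psi)/(\Diamond\varphi\to\Diamond\psi)$, $(\bigcirc\varphi\to\varphi)/(\Diamond\varphi\to\varphi)$; $\vdash\varphi$ means $\varphi\in{\sf ITL}^0_\Diamond$. Types: a $\Sigma$-type is a pair $\Phi=(\Phi^-;\Phi^+)$ of subsets of $\Sigma$ with $\Phi^-\cap\Phi^+=\varnothing$, $\Phi^-\cup\Phi^+=\Sigma$, $\bot\notin\Phi^+$, $\wedge,\vee$ in $\Phi^+$ behaving classically, ($\varphi\to\psi\in\Phi^+\Rightarrow\varphi\in\Phi^-$ or $\psi\in\Phi^+$), ($\Diamond\varphi\in\Phi^-\Rightarrow\varphi\in\Phi^-$). $\Phi\preccurlyeq_T\Psi$ iff $\Phi^+\subseteq\Psi^+$; $\Phi\subseteq_T\Psi$ iff $\Phi^-\subseteq\Psi^-$, $\Phi^+\subseteq\Psi^+$. $\Phi\,S_T\,\Psi$ iff: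 $\bigcirc\varphi\in\Phi^+\Rightarrow\varphi\in\Psi^+$; $\bigcirc\varphi\in\Phi^-\Rightarrow\varphi\in\Psi^-$; ($\Diamond\varphi\in\Phi^+$, $\varphi\in\Phi^-$)$\Rightarrow\Diamond\varphi\in\Psi^+$; $\Diamond\varphi\in\Phi^-\Rightarrow\Diamond\varphi\in\Psi^-$. A $\Sigma$-labelled frame is $(W,\preccurlyeq,\ell)$, $\preccurlyeq$ a partial order, $\ell$ mapping to $\Sigma$-types, monotone w.r.t. $\preccurlyeq_T$, and if $\varphi\to\psi\in\ell^-(w)$ then some $v\succcurlyeq w$ has $\varphi\in\ell^+(v)$, $\psi\in\ell^-(v)$. A weak $\Sigma$-quasimodel adds $S\subseteq W\times W$ forward-confluent and sensible ($w\,S\,v\Rightarrow\ell(w)\,S_T\,\ell(v)$); deterministic if $S$ is a function. A simulation from a $\Sigma$-labelled $\mathcal X$ to a $\Delta$-labelled $\mathcal Y$ ($\Sigma\subseteq\Delta$) is a forward-confluent $E\subseteq|\mathcal X|\times|\mathcal Y|$ (if $x\,E\,y$, $x\preccurlyeq x'$ then some $y'\succcurlyeq y$ has $x'\,E\,y'$) with $x\,E\,y\Rightarrow\ell(x)\subseteq_T\ell(y)$; $x\rightharpoonup y$ iff some simulation relates them; $E$ is dynamic if $x\,E\,y$ and $y\,S\,y'$ imply some $x'$ with $x\,S\,x'$, $x'\,E\,y'$; surjective if every point of $\mathcal A$ is in its range. $\mathrm{Sim}(w)=\bigwedge\ell^+(w)\to\big(\bigvee\ell^-(w)\vee\bigvee_{v\succ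 w}\mathrm{Sim}(v)\big)$, defined by backwards induction on $\prec$ ($\bigwedge\varnothing=\top$, $\bigvee\varnothing=\bot$). *)

theory Defs
  imports Main
begin

datatype fm =
    Atom nat
  | Bot
  | And fm fm
  | Or fm fm
  | Imp fm fm
  | Next fm
  | Dia fm

definition Top :: fm where "Top = Imp Bot Bot"
definition Neg :: "fm \<Rightarrow> fm" where "Neg \<phi> = Imp \<phi> Bot"

fun subfms :: "fm \<Rightarrow> fm set" where
  "subfms (Atom p) = {Atom p}"
| "subfms Bot = {Bot}"
| "subfms (And a b) = insert (And a b) (subfms a \<union> subfms b)"
| "subfms (Or a b) = insert (Or a b) (subfms a \<union> subfms b)"
| "subfms (Imp a b) = insert (Imp a b) (subfms a \<union> subfms b)"
| "subfms (Next a) = insert (Next a) (subfms a)"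
| "subfms (Dia a) = insert (Dia a) (subfms a)"

definition closed_sub :: "fm set \<Rightarrow> bool" where
  "closed_sub \<Sigma> \<longleftrightarrow> (\<forall>\<phi>\<in>\<Sigma>. subfms \<phi> \<subseteq> \<Sigma>)"

fun conj_list :: "fm list \<Rightarrow> fm" where
  "conj_list [] = Top"
| "conj_list [\<phi>] = \<phi>"
| "conj_list (\<phi> # \<psi>s) = And \<phi> (conj_list \<psi>s)"

fun disj_list :: "fm list \<Rightarrow> fm" where
  "disj_list [] = Bot"
| "disj_list [\<phi>] = \<phi>"
| "disj_list (\<phi> # \<psi>s) = Or \<phi> (disj_list \<psi>s)"

definition list_of :: "fm set \<Rightarrow> fm list" where
  "list_of A = (SOME xs. set xs = A \<and> distinct xs)"

definition BigAnd :: "fm set \<Rightarrow> fm" where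
  "BigAnd A = conj_list (list_of A)"

definition BigOr :: "fm set \<Rightarrow> fm" where
  "BigOr A = disj_list (list_of A)"

inductive prov :: "fm \<Rightarrow> bool" ("\<turnstile> _" [40] 40) where
  ax_K:   "\<turnstile> Imp \<phi> (Imp \<psi> \<phi>)"
| ax_S:   "\<turnstile> Imp (Imp \<phi> (Imp \<psi> \<chi>)) (Imp (Imp \<phi> \<psi>) (Imp \<phi> \<chi>))"
| ax_C1:  "\<turnstile> Imp (And \<phi> \<psi>) \<phi>"
| ax_C2:  "\<turnstile> Imp (And \<phi> \<psi>) \<psi>"
| ax_C3:  "\<turnstile> Imp \<phi> (Imp \<psi> (And \<phi> \<psi>))"
| ax_D1:  "\<turnstile> Imp \<phi> (Or \<phi> \<psi>)"
| ax_D2:  "\<turnstile> Imp \<psi> (Or \<phi> \<psi>)"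
| ax_D3:  "\<turnstile> Imp (Imp \<phi> \<chi>) (Imp (Imp \<psi> \<chi>) (Imp (Or \<phi> \<psi>) \<chi>))"
| ax_EFQ: "\<turnstile> Imp Bot \<phi>"
| ax_NBot:  "\<turnstile> Neg (Next Bot)"
| ax_NAnd:  "\<turnstile> Imp (And (Next \<phi>) (Next \<psi>)) (Next (And \<phi> \<psi>))"
| ax_NOr:   "\<turnstile> Imp (Next (Or \<phi> \<psi>)) (Or (Next \<phi>) (Next \<psi>))"
| ax_NImp:  "\<turnstile> Imp (Next (Imp \<phi> \<psi>)) (Imp (Next \<phi>) (Next \<psi>))"
| ax_Dia:   "\<turnstile> Imp (Or \<phi> (Next (Dia \<phi>))) (Dia \<phi>)"
| mp:       "\<turnstile> Imp \<phi> \<psi> \<Longrightarrow> \<turnstile> \<phi> \<Longrightarrow> \<turnstile> \<psi>"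
| nec:      "\<turnstile> \<phi> \<Longrightarrow> \<turnstile> Next \<phi>"
| dia_mono: "\<turnstile> Imp \<phi> \<psi> \<Longrightarrow> \<turnstile> Imp (Dia \<phi>) (Dia \<psi>)"
| dia_ind:  "\<turnstile> Imp (Next \<phi>) \<phi> \<Longrightarrow> \<turnstile> Imp (Dia \<phi>) \<phi>"

type_synonym ftype = "fm set \<times> fm set"

abbreviation tneg :: "ftype \<Rightarrow> fm set" where "tneg \<Phi> \<equiv> fst \<Phi>"
abbreviation tpos :: "ftype \<Rightarrow> fm set" where "tpos \<Phi> \<equiv> snd \<Phi>"

definition is_type :: "fm set \<Rightarrow> ftype \<Rightarrow> bool" where
  "is_type \<Sigma> \<Phi> \<longleftrightarrow>
     tneg \<Phi> \<inter> tpos \<Phi> = {} \<and> tneg \<Phi> \<union> tpos \<Phi> = \<Sigma> \<and> Bot \<notin> tpos \<Phi> \<and>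
     (\<forall>\<phi> \<psi>. And \<phi> \<psi> \<in> \<Sigma> \<longrightarrow> (And \<phi> \<psi> \<in> tpos \<Phi> \<longleftrightarrow> \<phi> \<in> tpos \<Phi> \<and> \<psi> \<in> tpos \<Phi>)) \<and>
     (\<forall>\<phi> \<psi>. Or \<phi> \<psi> \<in> \<Sigma> \<longrightarrow> (Or \<phi> \<psi> \<in> tpos \<Phi> \<longleftrightarrow> \<phi> \<in> tpos \<Phi> \<or> \<psi> \<in> tpos \<Phi>)) \<and>
     (\<forall>\<phi> \<psi>. Imp \<phi> \<psi> \<in> tpos \<Phi> \<longrightarrow> \<phi> \<in> tneg \<Phi> \<or> \<psi> \<in> tpos \<Phi>) \<and>
     (\<forall>\<phi>. Dia \<phi> \<in> tneg \<Phi> \<longrightarrow> \<phi> \<in> tneg \<Phi>)"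

definition sub_T :: "ftype \<Rightarrow> ftype \<Rightarrow> bool" where
  "sub_T \<Phi> \<Psi> \<longleftrightarrow> tneg \<Phi> \<subseteq> tneg \<Psi> \<and> tpos \<Phi> \<subseteq> tpos \<Psi>"

definition S_T :: "ftype \<Rightarrow> ftype \<Rightarrow> bool" where
  "S_T \<Phi> \<Psi> \<longleftrightarrow>
     (\<forall>\<phi>. Next \<phi> \<in> tpos \<Phi> \<longrightarrow> \<phi> \<in> tpos \<Psi>) \<and>
     (\<forall>\<phi>. Next \<phi> \<in> tneg \<Phi> \<longrightarrow> \<phi> \<in> tneg \<Psi>) \<and>
     (\<forall>\<phi>. Dia \<phi> \<in> tpos \<Phi> \<and> \<phi> \<in> tneg \<Phi> \<longrightarrow> Dia \<phi> \<in> tpos \<Psi>) \<and>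
     (\<forall>\<phi>. Dia \<phi> \<in> tneg \<Phi> \<longrightarrow> Dia \<phi> \<in> tneg \<Psi>)"

definition partial_order_on' :: "'a set \<Rightarrow> ('a \<Rightarrow> 'a \<Rightarrow> bool) \<Rightarrow> bool" where
  "partial_order_on' W le \<longleftrightarrow>
     (\<forall>x\<in>W. le x x) \<and>
     (\<forall>x\<in>W. \<forall>y\<in>W. \<forall>z\<in>W. le x y \<and> le y z \<longrightarrow> le x z) \<and>
     (\<forall>x\<in>W. \<forall>y\<in>W. le x y \<and> le y x \<longrightarrow> x = y)"

definition labelled_frame ::
  "fm set \<Rightarrow> 'a set \<Rightarrow> ('a \<Rightarrow> 'a \<Rightarrow> bool) \<Rightarrow> ('a \<Rightarrow> ftype) \<Rightarrow> bool" where
  "labelled_frame \<Sigma> W le lab \<longleftrightarrow>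
     partial_order_on' W le \<and>
     (\<forall>w\<in>W. is_type \<Sigma> (lab w)) \<and>
     (\<forall>w\<in>W. \<forall>v\<in>W. le w v \<longrightarrow> tpos (lab w) \<subseteq> tpos (lab v)) \<and>
     (\<forall>w\<in>W. \<forall>\<phi> \<psi>. Imp \<phi> \<psi> \<in> tneg (lab w) \<longrightarrow>
        (\<exists>v\<in>W. le w v \<and> \<phi> \<in> tpos (lab v) \<and> \<psi> \<in> tneg (lab v)))"

definition forward_confluent ::
  "'a set \<Rightarrow> ('a \<Rightarrow> 'a \<Rightarrow> bool) \<Rightarrow> ('a \<Rightarrow> 'a \<Rightarrow> bool) \<Rightarrow> bool" where
  "forward_confluent W le S \<longleftrightarrow>
     (\<forall>w\<in>W. \<forall>w'\<in>W. \<forall>v\<in>W. le w w' \<and> S w v \<longrightarrow> (\<exists>v'\<in>W. le v v' \<and> S w' v'))"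

definition weak_quasimodel ::
  "fm set \<Rightarrow> 'a set \<Rightarrow> ('a \<Rightarrow> 'a \<Rightarrow> bool) \<Rightarrow> ('a \<Rightarrow> ftype) \<Rightarrow> ('a \<Rightarrow> 'a \<Rightarrow> bool) \<Rightarrow> bool" where
  "weak_quasimodel \<Sigma> W le lab S \<longleftrightarrow>
     labelled_frame \<Sigma> W le lab \<and>
     (\<forall>w v. S w v \<longrightarrow> w \<in> W \<and> v \<in> W) \<and>
     forward_confluent W le S \<and>
     (\<forall>w\<in>W. \<forall>v\<in>W. S w v \<longrightarrow> S_T (lab w) (lab v))"

definition deterministic :: "'a set \<Rightarrow> ('a \<Rightarrow> 'a \<Rightarrow> bool) \<Rightarrow> bool" where
  "deterministic W S \<longleftrightarrow> (\<forall>w\<in>W. \<exists>!v. S w v)"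

definition simulation ::
  "'a set \<Rightarrow> ('a \<Rightarrow> 'a \<Rightarrow> bool) \<Rightarrow> ('a \<Rightarrow> ftype) \<Rightarrow>
   'b set \<Rightarrow> ('b \<Rightarrow> 'b \<Rightarrow> bool) \<Rightarrow> ('b \<Rightarrow> ftype) \<Rightarrow> ('a \<Rightarrow> 'b \<Rightarrow> bool) \<Rightarrow> bool" where
  "simulation W le lab W' le' lab' E \<longleftrightarrow>
     (\<forall>x y. E x y \<longrightarrow> x \<in> W \<and> y \<in> W') \<and>
     (\<forall>x y x'. E x y \<and> x' \<in> W \<and> le x x' \<longrightarrow> (\<exists>y'\<in>W'. le' y y' \<and> E x' y')) \<and>
     (\<forall>x y. E x y \<longrightarrow> sub_T (lab x) (lab' y))"

definition simulates ::
  "'a set \<Rightarrow> ('a \<Rightarrow> 'a \<Rightarrow> bool) \<Rightarrow> ('a \<Rightarrow> ftype) \<Rightarrow>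
   'b set \<Rightarrow> ('b \<Rightarrow> 'b \<Rightarrow> bool) \<Rightarrow> ('b \<Rightarrow> ftype) \<Rightarrow> 'a \<Rightarrow> 'b \<Rightarrow> bool" where
  "simulates W le lab W' le' lab' x y \<longleftrightarrow>
     (\<exists>E. simulation W le lab W' le' lab' E \<and> E x y)"

definition dynamic_rel ::
  "'a set \<Rightarrow> ('a \<Rightarrow> 'a \<Rightarrow> bool) \<Rightarrow> ('b \<Rightarrow> 'b \<Rightarrow> bool) \<Rightarrow> ('a \<Rightarrow> 'b \<Rightarrow> bool) \<Rightarrow> bool" where
  "dynamic_rel W S S' E \<longleftrightarrow>
     (\<forall>x y y'. E x y \<and> S' y y' \<longrightarrow> (\<exists>x'\<in>W. S x x' \<and> E x' y'))"

definition surjective_rel :: "'a set \<Rightarrow> 'b set \<Rightarrow> ('a \<Rightarrow> 'b \<Rightarrow> bool) \<Rightarrow> bool" where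
  "surjective_rel W W' E \<longleftrightarrow> (\<forall>y\<in>W'. \<exists>x\<in>W. E x y)"

text \<open>Sim is defined by backwards induction on the strict order; we compute it with
  a fuel parameter, and the value with fuel card W is the intended one (every point of a
  finite partial order has height below card W).\<close>

fun sim_fuel :: "nat \<Rightarrow> 'a set \<Rightarrow> ('a \<Rightarrow> 'a \<Rightarrow> bool) \<Rightarrow> ('a \<Rightarrow> ftype) \<Rightarrow> 'a \<Rightarrow> fm" where
  "sim_fuel 0 W le lab w = Bot"
| "sim_fuel (Suc n) W le lab w =
     Imp (BigAnd (tpos (lab w)))
         (Or (BigOr (tneg (lab w)))
             (BigOr ((\<lambda>v. sim_fuel n W le lab v) ` {v\<in>W. le w v \<and> v \<noteq> w})))"

definition Sim :: "'a set \<Rightarrow> ('a \<Rightarrow> 'a \<Rightarrow> bool) \<Rightarrow> ('a \<Rightarrow> ftype) \<Rightarrow> 'a \<Rightarrow> fm" where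
  "Sim W le lab w = sim_fuel (card W) W le lab w"

end

theory Submission
  imports Defs
begin

text \<open>Prime theories, read as types \<open>(-\<Gamma>, \<Gamma>)\<close>, form a deterministic weak quasimodel over the
  whole language, with successor \<open>\<Gamma> \<mapsto> {\<phi>. \<bigcirc>\<phi> \<in> \<Gamma>}\<close>. For a point \<open>u\<close> of \<open>\<I>\<close>, \<open>Sim(u)\<close> lies
  outside a prime theory \<open>\<Gamma>\<close> exactly when some prime extension of \<open>\<Gamma>\<close> simulates \<open>u\<close>: a
  simulation keeps \<open>Sim(u)\<close> out by induction on the height of \<open>u\<close>, and conversely a prime
  extension of \<open>\<Gamma>\<close> containing \<open>\<ell>\<^sup>+(u)\<close>, avoiding \<open>\<ell>\<^sup>-(u)\<close> and refuting \<open>Sim\<close> of every point strictly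
  above \<open>u\<close> can be unfolded into a simulation.
  Now suppose \<open>\<bigcirc>F \<rightarrow> F\<close> were unprovable, where \<open>F = \<And>\<^sub>v\<^sub>\<in>\<^sub>R\<^sub>(\<^sub>w\<^sub>) Sim(v)\<close>. A prime theory containing
  \<open>\<bigcirc>F\<close> but not \<open>F\<close> omits some \<open>Sim(v)\<close> with \<open>v \<in> R(w)\<close>, hence extends to a \<open>\<Delta>\<close> simulating \<open>v\<close>.
  Since simulations into the canonical model are dynamic, some \<open>S\<close>-successor \<open>v'\<close> of \<open>v\<close> is
  simulated by the successor of \<open>\<Delta>\<close>, which therefore omits \<open>Sim(v')\<close>. So \<open>\<bigcirc>Sim(v')\<close> is not
  provable, whence \<open>v' \<in> P\<close> and \<open>v' \<in> R(w)\<close>; but the successor of \<open>\<Delta>\<close> contains \<open>F\<close>.\<close>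

lemma prov_imp_refl: "\<turnstile> Imp a a"
proof -
  have "\<turnstile> Imp (Imp a (Imp (Imp a a) a)) (Imp (Imp a (Imp a a)) (Imp a a))" by (rule ax_S)
  then have "\<turnstile> Imp (Imp a (Imp a a)) (Imp a a)" using ax_K mp by blast
  then show ?thesis using ax_K mp by blast
qed

lemma prov_imp_const: "\<turnstile> b \<Longrightarrow> \<turnstile> Imp a b"
  using ax_K mp by blast

lemma prov_imp_trans:
  assumes "\<turnstile> Imp a b" and "\<turnstile> Imp b c"
  shows "\<turnstile> Imp a c"
proof -
  have "\<turnstile> Imp (Imp a b) (Imp a c)"
    using prov_imp_const[OF assms(2)] ax_S mp by blast
  then show ?thesis using assms(1) mp by blast
qed

lemma prov_Or_elim: "\<turnstile> Imp a c \<Longrightarrow> \<turnstile> Imp b c \<Longrightarrow> \<turnstile> Imp (Or a b) c"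
  using ax_D3 mp by blast

lemma prov_Next_mono: "\<turnstile> Imp a b \<Longrightarrow> \<turnstile> Imp (Next a) (Next b)"
  using nec ax_NImp mp by blast

lemma prov_Dia_intro: "\<turnstile> Imp a (Dia a)"
  using prov_imp_trans[OF ax_D1 ax_Dia] .

lemma prov_Next_Dia: "\<turnstile> Imp (Next (Dia a)) (Dia a)"
  using prov_imp_trans[OF ax_D2 ax_Dia] .

text \<open>The converse of the fixpoint axiom, obtained from the induction rule applied to
  \<open>a \<or> \<bigcirc>\<Diamond>a\<close>.\<close>

lemma prov_Dia_unfold: "\<turnstile> Imp (Dia a) (Or a (Next (Dia a)))"
proof -
  let ?c = "Or a (Next (Dia a))"
  have "\<turnstile> Imp (Or (Next a) (Next (Next (Dia a)))) (Next (Dia a))"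
    using prov_Or_elim[OF prov_Next_mono[OF prov_Dia_intro] prov_Next_mono[OF prov_Next_Dia]] .
  then have "\<turnstile> Imp (Next ?c) (Next (Dia a))" using prov_imp_trans[OF ax_NOr] by blast
  then have "\<turnstile> Imp (Next ?c) ?c" using prov_imp_trans ax_D2 by blast
  then have "\<turnstile> Imp (Dia ?c) ?c" by (rule dia_ind)
  then show ?thesis using prov_imp_trans[OF dia_mono[OF ax_D1]] by blast
qed

definition is_theory :: "fm set \<Rightarrow> bool" where
  "is_theory T \<longleftrightarrow> (\<forall>\<phi>. (\<turnstile> \<phi>) \<longrightarrow> \<phi> \<in> T) \<and> (\<forall>\<phi> \<psi>. Imp \<phi> \<psi> \<in> T \<longrightarrow> \<phi> \<in> T \<longrightarrow> \<psi> \<in> T)"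

definition prime_theory :: "fm set \<Rightarrow> bool" where
  "prime_theory T \<longleftrightarrow> is_theory T \<and> Bot \<notin> T \<and> (\<forall>\<phi> \<psi>. Or \<phi> \<psi> \<in> T \<longrightarrow> \<phi> \<in> T \<or> \<psi> \<in> T)"

lemma prime_theory_is_theory: "prime_theory T \<Longrightarrow> is_theory T"
  unfolding prime_theory_def by blast

lemma is_theory_provable: "is_theory {\<phi>. \<turnstile> \<phi>}"
  unfolding is_theory_def using mp by blast

lemma is_theory_prov: "is_theory T \<Longrightarrow> \<turnstile> \<phi> \<Longrightarrow> \<phi> \<in> T"
  unfolding is_theory_def by blast

lemma is_theory_mp: "is_theory T \<Longrightarrow> Imp \<phi> \<psi> \<in> T \<Longrightarrow> \<phi> \<in> T \<Longrightarrow> \<psi> \<in> T"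
  unfolding is_theory_def by blast

lemma is_theory_prov_imp: "is_theory T \<Longrightarrow> \<turnstile> Imp \<phi> \<psi> \<Longrightarrow> \<phi> \<in> T \<Longrightarrow> \<psi> \<in> T"
  using is_theory_prov is_theory_mp by blast

lemma is_theory_And_iff: "is_theory T \<Longrightarrow> And a b \<in> T \<longleftrightarrow> a \<in> T \<and> b \<in> T"
  using is_theory_prov_imp[OF _ ax_C1] is_theory_prov_imp[OF _ ax_C2]
    is_theory_mp is_theory_prov_imp[OF _ ax_C3] by blast

lemma prime_theory_Or_iff: "prime_theory T \<Longrightarrow> Or a b \<in> T \<longleftrightarrow> a \<in> T \<or> b \<in> T"
  unfolding prime_theory_def using is_theory_prov_imp[OF _ ax_D1] is_theory_prov_imp[OF _ ax_D2] by blast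

text \<open>\<open>{\<chi>. a \<rightarrow> \<chi> \<in> T}\<close> is the theory generated by \<open>T\<close> and \<open>a\<close> (deduction theorem).\<close>

lemma is_theory_Imp_set: assumes "is_theory T" shows "is_theory {\<chi>. Imp a \<chi> \<in> T}"
  unfolding is_theory_def
proof (intro conjI allI impI)
  fix \<phi> assume "\<turnstile> \<phi>"
  then show "\<phi> \<in> {\<chi>. Imp a \<chi> \<in> T}" using prov_imp_const is_theory_prov assms by blast
next
  fix \<phi> \<psi> assume "Imp \<phi> \<psi> \<in> {\<chi>. Imp a \<chi> \<in> T}" and "\<phi> \<in> {\<chi>. Imp a \<chi> \<in> T}"
  then show "\<psi> \<in> {\<chi>. Imp a \<chi> \<in> T}"
    using is_theory_mp[OF assms is_theory_mp[OF assms is_theory_prov[OF assms ax_S]]] by blast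
qed

lemma is_theory_subset_Imp_set: "is_theory T \<Longrightarrow> T \<subseteq> {\<chi>. Imp a \<chi> \<in> T}"
  using is_theory_prov_imp ax_K by blast

lemma is_theory_mem_Imp_set: "is_theory T \<Longrightarrow> a \<in> {\<chi>. Imp a \<chi> \<in> T}"
  using is_theory_prov prov_imp_refl by blast

lemma is_theory_union_chain:
  assumes "C \<noteq> {}" and "\<forall>X\<in>C. is_theory X" and "\<forall>X\<in>C. \<forall>Y\<in>C. X \<subseteq> Y \<or> Y \<subseteq> X"
  shows "is_theory (\<Union>C)"
  unfolding is_theory_def
proof (intro conjI allI impI)
  fix \<phi> assume "\<turnstile> \<phi>" then show "\<phi> \<in> \<Union>C" using assms(1,2) is_theory_prov by blast
next
  fix \<phi> \<chi> assume "Imp \<phi> \<chi> \<in> \<Union>C" and "\<phi> \<in> \<Union>C"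
  then obtain X Y where "X \<in> C" "Y \<in> C" "Imp \<phi> \<chi> \<in> X" "\<phi> \<in> Y" by blast
  then show "\<chi> \<in> \<Union>C" using assms(2,3) is_theory_mp by (metis UnionI subsetD)
qed

text \<open>Lindenbaum's lemma: a maximal theory avoiding \<open>\<psi>\<close> is prime, since for \<open>a \<notin> M\<close>
  maximality forces \<open>a \<rightarrow> \<psi> \<in> M\<close>.\<close>

lemma prime_theory_extension:
  assumes T: "is_theory T" and psi: "\<psi> \<notin> T"
  obtains M where "prime_theory M" "T \<subseteq> M" "\<psi> \<notin> M"
proof -
  let ?A = "{X. is_theory X \<and> T \<subseteq> X \<and> \<psi> \<notin> X}"
  have "\<exists>U\<in>?A. \<forall>X\<in>C. X \<subseteq> U" if C: "C \<in> chains ?A" for C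
  proof (cases "C = {}")
    case True then show ?thesis using T psi by blast
  next
    case False
    have "C \<subseteq> ?A" and "\<forall>X\<in>C. \<forall>Y\<in>C. X \<subseteq> Y \<or> Y \<subseteq> X"
      using C unfolding chains_def chain_subset_def by blast+
    then have "\<Union>C \<in> ?A" using False is_theory_union_chain[of C] by blast
    then show ?thesis by blast
  qed
  then obtain M where M: "M \<in> ?A" and max: "\<forall>X\<in>?A. M \<subseteq> X \<longrightarrow> X = M"
    using Zorn_Lemma2[of ?A] by blast
  have thM: "is_theory M" and TM: "T \<subseteq> M" and pM: "\<psi> \<notin> M" using M by auto
  have Imp_psi: "Imp a \<psi> \<in> M" if a: "a \<notin> M" for a
  proof (rule ccontr)
    assume "Imp a \<psi> \<notin> M"
    then have "{\<chi>. Imp a \<chi> \<in> M} \<in> ?A"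
      using is_theory_Imp_set[OF thM] is_theory_subset_Imp_set[OF thM] TM by blast
    then have "{\<chi>. Imp a \<chi> \<in> M} = M" using max is_theory_subset_Imp_set[OF thM] by blast
    then show False using is_theory_mem_Imp_set[OF thM] a by blast
  qed
  have "Bot \<notin> M" using pM is_theory_prov_imp[OF thM ax_EFQ] by blast
  moreover have "a \<in> M \<or> b \<in> M" if "Or a b \<in> M" for a b
    using that Imp_psi is_theory_mp[OF thM] is_theory_prov[OF thM ax_D3] pM by metis
  ultimately show ?thesis using that thM TM pM unfolding prime_theory_def by blast
qed

lemma prime_theory_extension_Imp:
  assumes "is_theory T" and "Imp a b \<notin> T"
  obtains M where "prime_theory M" "T \<subseteq> M" "a \<in> M" "b \<notin> M"
proof -
  have "b \<notin> {\<chi>. Imp a \<chi> \<in> T}" using assms by simp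
  then obtain M where "prime_theory M" "{\<chi>. Imp a \<chi> \<in> T} \<subseteq> M" "b \<notin> M"
    using prime_theory_extension[OF is_theory_Imp_set[OF assms(1)]] by blast
  then show ?thesis
    using that is_theory_subset_Imp_set[OF assms(1)] is_theory_mem_Imp_set[OF assms(1)] by blast
qed

lemma set_list_of: "finite A \<Longrightarrow> set (list_of A) = A"
  unfolding list_of_def using someI_ex[OF finite_distinct_list] by blast

lemma conj_list_mem_iff: "is_theory T \<Longrightarrow> conj_list xs \<in> T \<longleftrightarrow> set xs \<subseteq> T"
proof (induction xs rule: conj_list.induct)
  case 1 then show ?case using is_theory_prov[OF _ prov_imp_refl[of Bot]] by (simp add: Top_def)
next
  case (2 \<phi>) then show ?case by simp
next
  case (3 \<phi> v va) then show ?case using is_theory_And_iff by auto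
qed

lemma disj_list_mem_iff: "prime_theory T \<Longrightarrow> disj_list xs \<in> T \<longleftrightarrow> (\<exists>x\<in>set xs. x \<in> T)"
proof (induction xs rule: disj_list.induct)
  case 1 then show ?case unfolding prime_theory_def by auto
next
  case (2 \<phi>) then show ?case by simp
next
  case (3 \<phi> v va) then show ?case using prime_theory_Or_iff by auto
qed

lemma BigAnd_mem_iff: "is_theory T \<Longrightarrow> finite A \<Longrightarrow> BigAnd A \<in> T \<longleftrightarrow> A \<subseteq> T"
  unfolding BigAnd_def using conj_list_mem_iff set_list_of by blast

lemma BigOr_mem_iff: "prime_theory T \<Longrightarrow> finite A \<Longrightarrow> BigOr A \<in> T \<longleftrightarrow> (\<exists>x\<in>A. x \<in> T)"
  unfolding BigOr_def using disj_list_mem_iff set_list_of by blast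

section \<open>The canonical model\<close>

definition canon_worlds :: "ftype set" where
  "canon_worlds = {D. prime_theory (snd D) \<and> fst D = - snd D}"

definition canon_le :: "ftype \<Rightarrow> ftype \<Rightarrow> bool" where
  "canon_le D D' \<longleftrightarrow> snd D \<subseteq> snd D'"

definition canon_next :: "ftype \<Rightarrow> ftype" where
  "canon_next D = (- {\<phi>. Next \<phi> \<in> snd D}, {\<phi>. Next \<phi> \<in> snd D})"

definition canon_S :: "ftype \<Rightarrow> ftype \<Rightarrow> bool" where
  "canon_S D D' \<longleftrightarrow> D \<in> canon_worlds \<and> D' = canon_next D"

lemma prime_theory_in_canon_worlds: "prime_theory M \<Longrightarrow> (- M, M) \<in> canon_worlds"
  by (simp add: canon_worlds_def)

lemma canon_worlds_prime_theory: "D \<in> canon_worlds \<Longrightarrow> prime_theory (snd D)"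
  by (simp add: canon_worlds_def)

lemma canon_worlds_is_theory: "D \<in> canon_worlds \<Longrightarrow> is_theory (snd D)"
  using canon_worlds_prime_theory prime_theory_is_theory by blast

lemma prime_theory_Next_preimage:
  assumes "prime_theory T" shows "prime_theory {\<phi>. Next \<phi> \<in> T}"
proof -
  have th: "is_theory T" using assms prime_theory_is_theory by blast
  have "is_theory {\<phi>. Next \<phi> \<in> T}" unfolding is_theory_def
    using is_theory_prov[OF th nec] is_theory_mp[OF th is_theory_mp[OF th is_theory_prov[OF th ax_NImp]]]
    by blast
  moreover have "Bot \<notin> {\<phi>. Next \<phi> \<in> T}"
    using is_theory_prov_imp[OF th ax_NBot[unfolded Neg_def]] assms prime_theory_def by blast
  moreover have "a \<in> {\<phi>. Next \<phi> \<in> T} \<or> b \<in> {\<phi>. Next \<phi> \<in> T}"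
    if "Or a b \<in> {\<phi>. Next \<phi> \<in> T}" for a b
    using that is_theory_prov_imp[OF th ax_NOr] prime_theory_Or_iff[OF assms] by blast
  ultimately show ?thesis unfolding prime_theory_def by blast
qed

lemma canon_next_in_canon_worlds: "D \<in> canon_worlds \<Longrightarrow> canon_next D \<in> canon_worlds"
  unfolding canon_worlds_def canon_next_def using prime_theory_Next_preimage by auto

lemma prov_in_canon_next: "D \<in> canon_worlds \<Longrightarrow> \<turnstile> \<phi> \<Longrightarrow> \<phi> \<in> snd (canon_next D)"
  unfolding canon_next_def using canon_worlds_is_theory is_theory_prov nec by auto

lemma canon_worlds_is_type: assumes "D \<in> canon_worlds" shows "is_type UNIV D"
proof -
  have p: "prime_theory (snd D)" and f: "fst D = - snd D" using assms canon_worlds_def by auto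
  have th: "is_theory (snd D)" using canon_worlds_is_theory[OF assms] .
  show ?thesis unfolding is_type_def f
    using is_theory_And_iff[OF th] prime_theory_Or_iff[OF p] is_theory_mp[OF th]
      p[unfolded prime_theory_def] is_theory_prov_imp[OF th prov_Dia_intro] by auto
qed

lemma canon_labelled_frame: "labelled_frame UNIV canon_worlds canon_le id"
  unfolding labelled_frame_def
proof (intro conjI ballI allI impI)
  show "partial_order_on' canon_worlds canon_le"
    unfolding partial_order_on'_def canon_le_def canon_worlds_def by (auto simp: prod_eq_iff)
next
  fix w assume "w \<in> canon_worlds" then show "is_type UNIV (id w)"
    using canon_worlds_is_type by simp
next
  fix w v assume "canon_le w v" then show "tpos (id w) \<subseteq> tpos (id v)"
    by (simp add: canon_le_def)
next
  fix w \<phi> \<psi> assume w: "w \<in> canon_worlds" and "Imp \<phi> \<psi> \<in> tneg (id w)"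
  then have p: "prime_theory (snd w)" and "Imp \<phi> \<psi> \<notin> snd w"
    by (auto simp: canon_worlds_def)
  then obtain M where "prime_theory M" "snd w \<subseteq> M" "\<phi> \<in> M" "\<psi> \<notin> M"
    using prime_theory_extension_Imp prime_theory_is_theory by metis
  then show "\<exists>v\<in>canon_worlds. canon_le w v \<and> \<phi> \<in> tpos (id v) \<and> \<psi> \<in> tneg (id v)"
    by (intro bexI[of _ "(- M, M)"]) (auto simp: prime_theory_in_canon_worlds canon_le_def)
qed

lemma canon_S_sensible:
  assumes w: "w \<in> canon_worlds"
  shows "S_T w (canon_next w)"
proof -
  have p: "prime_theory (snd w)" and f: "fst w = - snd w" using w canon_worlds_def by auto
  have th: "is_theory (snd w)" using canon_worlds_is_theory[OF w] .
  have "Next (Dia \<phi>) \<in> snd w" if "Dia \<phi> \<in> snd w" "\<phi> \<notin> snd w" for \<phi>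
    using that is_theory_prov_imp[OF th prov_Dia_unfold] prime_theory_Or_iff[OF p] by blast
  moreover have "Dia \<phi> \<in> snd w" if "Next (Dia \<phi>) \<in> snd w" for \<phi>
    using that is_theory_prov_imp[OF th prov_Next_Dia] by blast
  ultimately show ?thesis unfolding S_T_def canon_next_def using f by auto
qed

lemma canon_weak_quasimodel: "weak_quasimodel UNIV canon_worlds canon_le id canon_S"
proof -
  have "forward_confluent canon_worlds canon_le canon_S"
    unfolding forward_confluent_def canon_S_def canon_le_def
    using canon_next_in_canon_worlds by (fastforce simp: canon_next_def)
  then show ?thesis unfolding weak_quasimodel_def
    using canon_labelled_frame canon_S_sensible canon_next_in_canon_worlds
    by (auto simp: canon_S_def)
qed

lemma canon_deterministic: "deterministic canon_worlds canon_S"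
  unfolding deterministic_def canon_S_def by auto

section \<open>Simulations into the canonical model and refutations of \<open>Sim\<close>\<close>

abbreviation strict_above :: "'a set \<Rightarrow> ('a \<Rightarrow> 'a \<Rightarrow> bool) \<Rightarrow> 'a \<Rightarrow> 'a set" where
  "strict_above W le u \<equiv> {v\<in>W. le u v \<and> v \<noteq> u}"

lemma labelled_frame_finite_type:
  assumes "labelled_frame \<Sigma> W le lab" and "finite \<Sigma>" and "u \<in> W"
  shows "finite (tpos (lab u))" and "finite (tneg (lab u))"
proof -
  have "is_type \<Sigma> (lab u)" using assms unfolding labelled_frame_def by blast
  then have "tpos (lab u) \<subseteq> \<Sigma>" "tneg (lab u) \<subseteq> \<Sigma>" unfolding is_type_def by blast+
  then show "finite (tpos (lab u))" "finite (tneg (lab u))"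
    using assms(2) finite_subset by blast+
qed

lemma simulation_dest:
  "simulation W le lab W' le' lab' E \<Longrightarrow> E x y \<Longrightarrow> x \<in> W \<and> y \<in> W' \<and> sub_T (lab x) (lab' y)"
  unfolding simulation_def by metis

lemma simulation_forward:
  "simulation W le lab W' le' lab' E \<Longrightarrow> E x y \<Longrightarrow> x' \<in> W \<Longrightarrow> le x x' \<Longrightarrow>
    \<exists>y'\<in>W'. le' y y' \<and> E x' y'"
  unfolding simulation_def by metis

lemma sim_fuel_notin_if_simulation:
  assumes lf: "labelled_frame \<Sigma> W le lab" and fS: "finite \<Sigma>" and fW: "finite W"
    and sim: "simulation W le lab canon_worlds canon_le id E"
  shows "E u D \<Longrightarrow> sim_fuel n W le lab u \<notin> snd D"
proof (induction n arbitrary: u D)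
  case 0
  then have "D \<in> canon_worlds" using simulation_dest[OF sim] by blast
  then show ?case by (simp add: canon_worlds_def prime_theory_def)
next
  case (Suc n)
  have uW: "u \<in> W" and DW: "D \<in> canon_worlds" and sub: "sub_T (lab u) D"
    using simulation_dest[OF sim Suc.prems] by simp_all
  have p: "prime_theory (snd D)" and f: "fst D = - snd D"
    using DW unfolding canon_worlds_def by simp_all
  have th: "is_theory (snd D)" using canon_worlds_is_theory[OF DW] .
  note fin = labelled_frame_finite_type[OF lf fS uW]
  let ?Sims = "(\<lambda>v. sim_fuel n W le lab v) ` strict_above W le u"
  have "?Sims \<inter> snd D = {}"
  proof -
    have "sim_fuel n W le lab v \<notin> snd D" if v: "v \<in> strict_above W le u" for v
    proof -
      obtain D' where "canon_le D D'" "E v D'"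
        using simulation_forward[OF sim Suc.prems] v by blast
      then show ?thesis using Suc.IH canon_le_def by blast
    qed
    then show ?thesis by blast
  qed
  moreover have "finite ?Sims" using fW by simp
  ultimately have "BigOr ?Sims \<notin> snd D" using BigOr_mem_iff[OF p] by blast
  moreover have "BigOr (tneg (lab u)) \<notin> snd D"
    using BigOr_mem_iff[OF p fin(2)] sub f unfolding sub_T_def by blast
  moreover have "BigAnd (tpos (lab u)) \<in> snd D"
    using BigAnd_mem_iff[OF th fin(1)] sub unfolding sub_T_def by blast
  ultimately have "Imp (BigAnd (tpos (lab u))) (Or (BigOr (tneg (lab u))) (BigOr ?Sims)) \<notin> snd D"
    using is_theory_mp[OF th] prime_theory_Or_iff[OF p] by blast
  then show ?case by simp
qed

lemma Sim_notin_if_simulates: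
  assumes "labelled_frame \<Sigma> W le lab" and "finite \<Sigma>" and "finite W"
    and "simulation W le lab canon_worlds canon_le id E" and "E u D"
  shows "Sim W le lab u \<notin> snd D"
  unfolding Sim_def using sim_fuel_notin_if_simulation[OF assms] .

lemma sim_fuel_Suc_refutation:
  assumes lf: "labelled_frame \<Sigma> W le lab" and fS: "finite \<Sigma>" and fW: "finite W"
    and \<Gamma>: "prime_theory \<Gamma>" and uW: "u \<in> W" and ns: "sim_fuel (Suc m) W le lab u \<notin> \<Gamma>"
  obtains D where "D \<in> canon_worlds" "\<Gamma> \<subseteq> snd D" "sub_T (lab u) D"
    "\<forall>u'\<in>strict_above W le u. sim_fuel m W le lab u' \<notin> snd D"
proof -
  note fin = labelled_frame_finite_type[OF lf fS uW]
  let ?Sims = "(\<lambda>v. sim_fuel m W le lab v) ` strict_above W le u"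
  have "Imp (BigAnd (tpos (lab u))) (Or (BigOr (tneg (lab u))) (BigOr ?Sims)) \<notin> \<Gamma>"
    using ns by simp
  then obtain M where M: "prime_theory M" "\<Gamma> \<subseteq> M" "BigAnd (tpos (lab u)) \<in> M"
     "Or (BigOr (tneg (lab u))) (BigOr ?Sims) \<notin> M"
    using prime_theory_extension_Imp[OF prime_theory_is_theory[OF \<Gamma>]] by blast
  have "tpos (lab u) \<subseteq> M" using BigAnd_mem_iff[OF prime_theory_is_theory fin(1)] M by blast
  moreover have "tneg (lab u) \<subseteq> - M"
    using M(4) prime_theory_Or_iff[OF M(1)] BigOr_mem_iff[OF M(1) fin(2)] by blast
  moreover have "\<forall>u'\<in>strict_above W le u. sim_fuel m W le lab u' \<notin> M"
  proof -
    have "finite ?Sims" using fW by simp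
    then show ?thesis using M(4) prime_theory_Or_iff[OF M(1)] BigOr_mem_iff[OF M(1)] by blast
  qed
  ultimately show ?thesis
    using that[of "(- M, M)"] prime_theory_in_canon_worlds[OF M(1)] M(2) by (simp add: sub_T_def)
qed

text \<open>Fuel at least the number of points strictly above \<open>u\<close> leaves enough to unfold \<open>Sim\<close> once
  more at each of them, which is what makes this relation forward-confluent.\<close>

definition canon_refutation ::
  "'a set \<Rightarrow> ('a \<Rightarrow> 'a \<Rightarrow> bool) \<Rightarrow> ('a \<Rightarrow> ftype) \<Rightarrow> 'a \<Rightarrow> ftype \<Rightarrow> bool" where
  "canon_refutation W le lab u D \<longleftrightarrow> u \<in> W \<and> D \<in> canon_worlds \<and> sub_T (lab u) D \<and>
     (\<exists>n. card (strict_above W le u) \<le> n \<and>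
        (\<forall>u'\<in>strict_above W le u. sim_fuel n W le lab u' \<notin> snd D))"

lemma card_strict_above_less:
  assumes po: "partial_order_on' W le" and fW: "finite W"
    and xW: "x \<in> W" and x'W: "x' \<in> W" and "le x x'" and "x' \<noteq> x"
  shows "card (strict_above W le x') < card (strict_above W le x)"
proof -
  have "strict_above W le x' \<subseteq> strict_above W le x - {x'}"
    using po assms(5,6) xW x'W unfolding partial_order_on'_def by blast
  then have "card (strict_above W le x') \<le> card (strict_above W le x - {x'})"
    using fW by (intro card_mono) auto
  also have "\<dots> < card (strict_above W le x)"
    using fW x'W assms(5,6) by (intro card_Diff1_less) auto
  finally show ?thesis .
qed

lemma canon_refutation_simulation:
  assumes lf: "labelled_frame \<Sigma> W le lab" and fS: "finite \<Sigma>" and fW: "finite W"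
  shows "simulation W le lab canon_worlds canon_le id (canon_refutation W le lab)"
proof -
  have po: "partial_order_on' W le" using lf unfolding labelled_frame_def by blast
  have forward: "\<exists>y'\<in>canon_worlds. canon_le y y' \<and> canon_refutation W le lab x' y'"
    if xy: "canon_refutation W le lab x y" and x'W: "x' \<in> W" and le: "le x x'" for x y x'
  proof (cases "x' = x")
    case True then show ?thesis using xy by (auto simp: canon_le_def canon_refutation_def)
  next
    case False
    from xy obtain n where xW: "x \<in> W" and yW: "y \<in> canon_worlds"
      and n: "card (strict_above W le x) \<le> n"
      and r: "\<forall>u'\<in>strict_above W le x. sim_fuel n W le lab u' \<notin> snd y"
      unfolding canon_refutation_def by blast
    obtain m where nm: "n = Suc m" and cm: "card (strict_above W le x') \<le> m"
      using n card_strict_above_less[OF po fW xW x'W le False] by (cases n) auto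
    have py: "prime_theory (snd y)" using canon_worlds_prime_theory[OF yW] .
    have "sim_fuel (Suc m) W le lab x' \<notin> snd y" using r x'W le False nm by blast
    then obtain D' where "D' \<in> canon_worlds" "snd y \<subseteq> snd D'" "sub_T (lab x') D'"
       "\<forall>u'\<in>strict_above W le x'. sim_fuel m W le lab u' \<notin> snd D'"
      by (rule sim_fuel_Suc_refutation[OF lf fS fW py x'W])
    then show ?thesis using cm x'W unfolding canon_refutation_def canon_le_def by blast
  qed
  moreover have "x \<in> W \<and> y \<in> canon_worlds \<and> sub_T (lab x) (id y)"
    if "canon_refutation W le lab x y" for x y
    using that unfolding canon_refutation_def by simp
  ultimately show ?thesis unfolding simulation_def by blast
qed

lemma simulates_if_Sim_notin:
  assumes lf: "labelled_frame \<Sigma> W le lab" and fS: "finite \<Sigma>" and fW: "finite W"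
    and \<Gamma>: "prime_theory \<Gamma>" and vW: "v \<in> W" and ns: "Sim W le lab v \<notin> \<Gamma>"
  obtains D where "D \<in> canon_worlds" "\<Gamma> \<subseteq> snd D"
    "simulates W le lab canon_worlds canon_le id v D"
proof -
  obtain m where cW: "card W = Suc m" using fW vW by (cases "card W") auto
  have "sim_fuel (Suc m) W le lab v \<notin> \<Gamma>" using ns unfolding Sim_def cW .
  then obtain D where D: "D \<in> canon_worlds" "\<Gamma> \<subseteq> snd D" "sub_T (lab v) D"
     "\<forall>u'\<in>strict_above W le v. sim_fuel m W le lab u' \<notin> snd D"
    by (rule sim_fuel_Suc_refutation[OF lf fS fW \<Gamma> vW])
  have "card (strict_above W le v) \<le> card (W - {v})" using fW by (intro card_mono) auto
  also have "\<dots> = m" using cW vW fW by simp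
  finally have "canon_refutation W le lab v D"
    unfolding canon_refutation_def using vW D by blast
  then show ?thesis
    using that D(1,2) canon_refutation_simulation[OF lf fS fW] unfolding simulates_def by blast
qed

theorem lemma7p2:
  fixes \<Sigma> :: "fm set"
    and W :: "'a set" and le :: "'a \<Rightarrow> 'a \<Rightarrow> bool"
    and lab :: "'a \<Rightarrow> ftype" and S :: "'a \<Rightarrow> 'a \<Rightarrow> bool"
  assumes "finite \<Sigma>" and "closed_sub \<Sigma>"
    and "finite W"
    and "weak_quasimodel \<Sigma> W le lab S"
    and "\<And>(W' :: ftype set) le' lab' S'.
           weak_quasimodel UNIV W' le' lab' S' \<Longrightarrow> deterministic W' S' \<Longrightarrow>
           simulation W le lab W' le' lab' (simulates W le lab W' le' lab') \<and>
           dynamic_rel W S S' (simulates W le lab W' le' lab') \<and>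
           surjective_rel W W' (simulates W le lab W' le' lab')"
    and "P = {w\<in>W. \<not> (\<turnstile> Sim W le lab w)}"
    and "R = (\<lambda>w. {v\<in>P. (\<lambda>x y. x \<in> P \<and> y \<in> P \<and> S x y)\<^sup>*\<^sup>* w v})"
    and "w \<in> P"
  shows "\<turnstile> Imp (Next (BigAnd (Sim W le lab ` R w))) (BigAnd (Sim W le lab ` R w))"
proof (rule ccontr)
  note fS = assms(1) and fW = assms(3) and Pdef = assms(6) and Rdef = assms(7)
  have lf: "labelled_frame \<Sigma> W le lab" using assms(4) unfolding weak_quasimodel_def by blast
  let ?E = "simulates W le lab canon_worlds canon_le id"
  have sim: "simulation W le lab canon_worlds canon_le id ?E"
    and dyn: "dynamic_rel W S canon_S ?E"
    using assms(5)[OF canon_weak_quasimodel canon_deterministic] by simp_all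
  let ?F = "BigAnd (Sim W le lab ` R w)"
  have finA: "finite (Sim W le lab ` R w)" using fW Pdef Rdef by simp
  assume "\<not> (\<turnstile> Imp (Next ?F) ?F)"
  then obtain G where G: "prime_theory G" "Next ?F \<in> G" "?F \<notin> G"
    using prime_theory_extension_Imp[OF is_theory_provable] by (metis mem_Collect_eq)
  then obtain v where vR: "v \<in> R w" and "Sim W le lab v \<notin> G"
    using BigAnd_mem_iff[OF prime_theory_is_theory finA] by blast
  moreover have "v \<in> W" using vR Pdef Rdef by simp
  ultimately obtain D where D: "D \<in> canon_worlds" "G \<subseteq> snd D" "?E v D"
    using simulates_if_Sim_notin[OF lf fS fW G(1)] by metis
  then obtain v' where v': "S v v'" "?E v' (canon_next D)"
    using dyn unfolding dynamic_rel_def canon_S_def by blast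
  have ns: "Sim W le lab v' \<notin> snd (canon_next D)"
    using Sim_notin_if_simulates[OF lf fS fW sim v'(2)] .
  then have "\<not> (\<turnstile> Sim W le lab v')" using prov_in_canon_next[OF D(1)] by blast
  then have "v' \<in> P" using simulation_dest[OF sim v'(2)] Pdef by blast
  then have "v' \<in> R w"
    using vR v'(1) unfolding Rdef by (auto intro: rtranclp.rtrancl_into_rtrancl)
  moreover have "?F \<in> snd (canon_next D)" using G(2) D(2) by (auto simp: canon_next_def)
  ultimately show False
    using ns BigAnd_mem_iff[OF canon_worlds_is_theory[OF canon_next_in_canon_worlds[OF D(1)]] finA]
    by blast
qed

end
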